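(* Let $G$ be a group generated by a finite symmetric set $X$ and hyperbolic relative to a finite collection of subgroups $\{H_\lambda\}_{\lambda\in\Lambda}$; let $\mathcal H=\bigsqcup_\lambda(H_\lambda\setminus\{1\})$ and $\Gamma=\Gamma(G,X\cup\mathcal H)$. Let $L>0$ be a constant such that for every cycle $q$ in $\Gamma$, every $\lambda\in\Lambda$ and every set of isolated $H_\lambda$-components $p_1,\dots,p_k$ of $q$, one has $\sum_{i=1}^k d_X((p_i)_-,(p_i)_+)\le L\,l(q)$. Let $s\ge 0$ and let $\epsilon\ge 0$ be a constant such that: whenever $p_1,p_2$ are geodesics in $\Gamma$ with $\max\{d_X((p_1)_-,(p_2)_-),d_X((p_1)_+,(p_2)_+)\}\le s$ and $c$ is a component of $p_1$ with $d_X(c_-,c_+)\ge\epsilon$, there is a component of $p_2$ connected to $c$. Now let $p_1=q_1e_1$ and $p_2=q_2e_2$ be geodesics in $\Gamma$ (with $e_1,e_2$ their last edges) such that $\max\{d_X((p_1)_-,(p_2)_-),d_X((p_1)_+,(p_2)_+)\}\le s$, and suppose that for some $\lambda\in\Lambda$, $e_1$ and $e_2$ are $H_\lambda$-components of $p_1$ and $p_2$ respectively with $d_X((e_i)_-,(e_i)_+)\ge\max\{\epsilon,2L(s+1)\}$ for $i=1,2$. Then $e_1$ and $e_2$ are connected.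
   Context: Relative hyperbolicity: with $F=(\ast_\lambda H_\lambda)\ast F(X)$ and $\varepsilon:F\to G$ the natural map, $G$ is hyperbolic relative to $\{H_\lambda\}$ if $\ker\varepsilon$ is the normal closure of a finite set $\mathcal R$ and there is $C>0$ such that every word $W$ over $X\cup\mathcal H$ representing $1$ in $G$ can be written in $F$ as a product of at most $C\|W\|$ conjugates of elements of $\mathcal R^{\pm1}$. The Cayley graph $\Gamma(G,\mathcal A)$ has vertex set $G$ and an edge labelled $a$ from $g$ to $ga$ for each $g\in G$, $a\in\mathcal A$; paths have origin $p_-$, terminus $p_+$, length $l(p)$ (number of edges). $d_X$ and $d_{X\cup\mathcal H}$ denote the word metrics for $X$ and $X\cup\mathcal H$. For a path $q$ in $\Gamma$, a subpath $p$ is an $H_\lambda$-component of $q$ if its label is a word in $H_\lambda\setminus\{1\}$ and $p$ is not contained in a longer subpath of $q$ with this property. Two components $p_1,p_2$ (of the same or different paths) are connected if they are $H_\lambda$-components for the same $\lambda$ and all their vertices lie in a common left coset $gH_\lambda$. An $H_\lambda$-component of $q$ is isolated if no other $H_\lambda$-component of $q$ is connected to it. *)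

theory Defs
  imports Complex_Main "HOL-Algebra.Coset" "HOL-Algebra.Generated_Groups"
begin

text \<open>Letters of F: Inl (x, True) is the free generator x in X, Inl (x, False) its inverse;
  Inr (l, h) is the element h of H_l minus 1 (the l-th factor, tagged by l).\<close>

definition validF :: "('a,'b) monoid_scheme \<Rightarrow> 'a set \<Rightarrow> 'l set \<Rightarrow> ('l \<Rightarrow> 'a set)
    \<Rightarrow> ('a \<times> bool) + ('l \<times> 'a) \<Rightarrow> bool" where
  "validF G X Lam H a = (case a of Inl (x, b) \<Rightarrow> x \<in> X
                         | Inr (l, h) \<Rightarrow> l \<in> Lam \<and> h \<in> H l \<and> h \<noteq> \<one>\<^bsub>G\<^esub>)"

definition evF :: "('a,'b) monoid_scheme \<Rightarrow> ('a \<times> bool) + ('l \<times> 'a) \<Rightarrow> 'a" where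
  "evF G a = (case a of Inl (x, b) \<Rightarrow> (if b then x else inv\<^bsub>G\<^esub> x) | Inr (l, h) \<Rightarrow> h)"

text \<open>The natural map epsilon: F \<rightarrow> G on words.\<close>
definition evFw :: "('a,'b) monoid_scheme \<Rightarrow> (('a \<times> bool) + ('l \<times> 'a)) list \<Rightarrow> 'a" where
  "evFw G w = foldr (\<lambda>a r. evF G a \<otimes>\<^bsub>G\<^esub> r) w \<one>\<^bsub>G\<^esub>"

definition invF :: "('a,'b) monoid_scheme \<Rightarrow> ('a \<times> bool) + ('l \<times> 'a) \<Rightarrow> ('a \<times> bool) + ('l \<times> 'a)" where
  "invF G a = (case a of Inl (x, b) \<Rightarrow> Inl (x, \<not> b) | Inr (l, h) \<Rightarrow> Inr (l, inv\<^bsub>G\<^esub> h))"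

definition invFw :: "('a,'b) monoid_scheme \<Rightarrow> (('a \<times> bool) + ('l \<times> 'a)) list
    \<Rightarrow> (('a \<times> bool) + ('l \<times> 'a)) list" where
  "invFw G w = rev (map (invF G) w)"

text \<open>Elementary reductions of words in the free product; equality in F is the equivalence
  closure of these (normal form theorem for free products).\<close>
definition F_step :: "('a,'b) monoid_scheme \<Rightarrow> (('a \<times> bool) + ('l \<times> 'a)) list
    \<Rightarrow> (('a \<times> bool) + ('l \<times> 'a)) list \<Rightarrow> bool" where
  "F_step G u v =
     ((\<exists>a b x e. u = a @ [Inl (x, e), Inl (x, \<not> e)] @ b \<and> v = a @ b) \<or>
      (\<exists>a b l h h'. u = a @ [Inr (l, h), Inr (l, h')] @ b \<and>
          v = a @ (if h \<otimes>\<^bsub>G\<^esub> h' = \<one>\<^bsub>G\<^esub> then [] else [Inr (l, h \<otimes>\<^bsub>G\<^esub> h')]) @ b))"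

definition F_eq :: "('a,'b) monoid_scheme \<Rightarrow> (('a \<times> bool) + ('l \<times> 'a)) list
    \<Rightarrow> (('a \<times> bool) + ('l \<times> 'a)) list \<Rightarrow> bool" where
  "F_eq G = equivclp (F_step G)"

text \<open>Relative hyperbolicity (Osin): ker epsilon is the normal closure of a finite set R,
  and the relative Dehn function is linear.\<close>
definition rel_hyperbolic :: "('a,'b) monoid_scheme \<Rightarrow> 'a set \<Rightarrow> 'l set \<Rightarrow> ('l \<Rightarrow> 'a set) \<Rightarrow> bool" where
  "rel_hyperbolic G X Lam H =
     (\<exists>R :: (('a \<times> bool) + ('l \<times> 'a)) list set.
        finite R \<and>
        (\<forall>r\<in>R. (\<forall>a\<in>set r. validF G X Lam H a) \<and> evFw G r = \<one>\<^bsub>G\<^esub>) \<and>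
        (\<exists>C::real. C > 0 \<and>
          (\<forall>W. (\<forall>a\<in>set W. validF G X Lam H a) \<and> evFw G W = \<one>\<^bsub>G\<^esub> \<longrightarrow>
             (\<exists>cs :: ((('a \<times> bool) + ('l \<times> 'a)) list \<times> (('a \<times> bool) + ('l \<times> 'a)) list \<times> bool) list.
                real (length cs) \<le> C * real (length W) \<and>
                (\<forall>(u, r, e)\<in>set cs. (\<forall>a\<in>set u. validF G X Lam H a) \<and> r \<in> R) \<and>
                F_eq G W (concat (map (\<lambda>(u, r, e). u @ (if e then r else invFw G r) @ invFw G u) cs))))))"

text \<open>Edge labels: Inl x for x in X, Inr (l, h) for h in H_l minus 1 (disjoint union).
  A path is given by its origin g and its label w.\<close>

definition validC :: "('a,'b) monoid_scheme \<Rightarrow> 'a set \<Rightarrow> 'l set \<Rightarrow> ('l \<Rightarrow> 'a set)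
    \<Rightarrow> 'a + ('l \<times> 'a) \<Rightarrow> bool" where
  "validC G X Lam H a = (case a of Inl x \<Rightarrow> x \<in> X
                         | Inr (l, h) \<Rightarrow> l \<in> Lam \<and> h \<in> H l \<and> h \<noteq> \<one>\<^bsub>G\<^esub>)"

definition evC :: "'a + ('l \<times> 'a) \<Rightarrow> 'a" where
  "evC a = (case a of Inl x \<Rightarrow> x | Inr (l, h) \<Rightarrow> h)"

definition evCw :: "('a,'b) monoid_scheme \<Rightarrow> ('a + ('l \<times> 'a)) list \<Rightarrow> 'a" where
  "evCw G w = foldr (\<lambda>a r. evC a \<otimes>\<^bsub>G\<^esub> r) w \<one>\<^bsub>G\<^esub>"

definition is_path :: "('a,'b) monoid_scheme \<Rightarrow> 'a set \<Rightarrow> 'l set \<Rightarrow> ('l \<Rightarrow> 'a set)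
    \<Rightarrow> 'a \<Rightarrow> ('a + ('l \<times> 'a)) list \<Rightarrow> bool" where
  "is_path G X Lam H g w = (g \<in> carrier G \<and> (\<forall>a\<in>set w. validC G X Lam H a))"

text \<open>The k-th vertex of the path (g, w); vertex 0 is p_-, vertex (length w) is p_+.\<close>
definition vert :: "('a,'b) monoid_scheme \<Rightarrow> 'a \<Rightarrow> ('a + ('l \<times> 'a)) list \<Rightarrow> nat \<Rightarrow> 'a" where
  "vert G g w k = g \<otimes>\<^bsub>G\<^esub> evCw G (take k w)"

definition dX :: "('a,'b) monoid_scheme \<Rightarrow> 'a set \<Rightarrow> 'a \<Rightarrow> 'a \<Rightarrow> nat" where
  "dX G X g h = (LEAST n. \<exists>w. set w \<subseteq> X \<and> length w = n \<and> g \<otimes>\<^bsub>G\<^esub> foldr (\<otimes>\<^bsub>G\<^esub>) w \<one>\<^bsub>G\<^esub> = h)"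

definition dXH :: "('a,'b) monoid_scheme \<Rightarrow> 'a set \<Rightarrow> 'l set \<Rightarrow> ('l \<Rightarrow> 'a set) \<Rightarrow> 'a \<Rightarrow> 'a \<Rightarrow> nat" where
  "dXH G X Lam H g h = (LEAST n. \<exists>w. (\<forall>a\<in>set w. validC G X Lam H a) \<and> length w = n \<and> g \<otimes>\<^bsub>G\<^esub> evCw G w = h)"

definition is_geodesic :: "('a,'b) monoid_scheme \<Rightarrow> 'a set \<Rightarrow> 'l set \<Rightarrow> ('l \<Rightarrow> 'a set)
    \<Rightarrow> 'a \<Rightarrow> ('a + ('l \<times> 'a)) list \<Rightarrow> bool" where
  "is_geodesic G X Lam H g w =
     (is_path G X Lam H g w \<and> length w = dXH G X Lam H g (vert G g w (length w)))"

definition is_cycle :: "('a,'b) monoid_scheme \<Rightarrow> 'a set \<Rightarrow> 'l set \<Rightarrow> ('l \<Rightarrow> 'a set)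
    \<Rightarrow> 'a \<Rightarrow> ('a + ('l \<times> 'a)) list \<Rightarrow> bool" where
  "is_cycle G X Lam H g w = (is_path G X Lam H g w \<and> vert G g w (length w) = g)"

definition isH :: "'l \<Rightarrow> 'a + ('l \<times> 'a) \<Rightarrow> bool" where
  "isH l a = (\<exists>h. a = Inr (l, h))"

definition Hsub :: "'l \<Rightarrow> ('a + ('l \<times> 'a)) list \<Rightarrow> nat \<Rightarrow> nat \<Rightarrow> bool" where
  "Hsub l w i j = (i < j \<and> j \<le> length w \<and> (\<forall>k. i \<le> k \<and> k < j \<longrightarrow> isH l (w ! k)))"

definition component :: "'l \<Rightarrow> ('a + ('l \<times> 'a)) list \<Rightarrow> nat \<Rightarrow> nat \<Rightarrow> bool" where
  "component l w i j = (Hsub l w i j \<and>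
     \<not> (\<exists>i' j'. i' \<le> i \<and> j \<le> j' \<and> (i', j') \<noteq> (i, j) \<and> Hsub l w i' j'))"

definition comp_verts :: "('a,'b) monoid_scheme \<Rightarrow> 'a \<Rightarrow> ('a + ('l \<times> 'a)) list \<Rightarrow> nat \<Rightarrow> nat \<Rightarrow> 'a set" where
  "comp_verts G g w i j = {vert G g w k | k. i \<le> k \<and> k \<le> j}"

definition connected_comps :: "('a,'b) monoid_scheme \<Rightarrow> ('l \<Rightarrow> 'a set)
    \<Rightarrow> 'l \<Rightarrow> 'a \<Rightarrow> ('a + ('l \<times> 'a)) list \<Rightarrow> nat \<Rightarrow> nat
    \<Rightarrow> 'l \<Rightarrow> 'a \<Rightarrow> ('a + ('l \<times> 'a)) list \<Rightarrow> nat \<Rightarrow> nat \<Rightarrow> bool" where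
  "connected_comps G H l1 g1 w1 i1 j1 l2 g2 w2 i2 j2 =
     (component l1 w1 i1 j1 \<and> component l2 w2 i2 j2 \<and> l1 = l2 \<and>
      (\<exists>x\<in>carrier G. comp_verts G g1 w1 i1 j1 \<subseteq> x <#\<^bsub>G\<^esub> H l1 \<and>
                     comp_verts G g2 w2 i2 j2 \<subseteq> x <#\<^bsub>G\<^esub> H l1))"

definition isolated :: "('a,'b) monoid_scheme \<Rightarrow> ('l \<Rightarrow> 'a set)
    \<Rightarrow> 'l \<Rightarrow> 'a \<Rightarrow> ('a + ('l \<times> 'a)) list \<Rightarrow> nat \<Rightarrow> nat \<Rightarrow> bool" where
  "isolated G H l g w i j = (component l w i j \<and>
     \<not> (\<exists>i' j'. (i', j') \<noteq> (i, j) \<and> component l w i' j' \<and>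
                connected_comps G H l g w i j l g w i' j'))"

end

(*
  Suppose e1 and e2 are not connected. As d_X((e1)_-, (e1)_+) >= eps, e1 is connected to a component c of p2
  other than e2, so every vertex of c lies in the coset (e1)_+ H_l. Let k <= s be the X-distance
  from (e1)_+ to (e2)_+ and close up a cycle: e2, an X-path of length k from (e2)_+ to (e1)_+,
  at most one H_l-edge to c_+, and p2 backwards from c_+ to (e2)_-. Since p2 is geodesic, its
  part after c_+ is no longer than the detour through (e1)_+, so the cycle has length at most
  2k + 2. Two vertices of a geodesic in a common H_l-coset are at most one edge apart; this makes
  e2, and the extra H_l-edge if present, isolated in the cycle. The defining property of L then
  gives d_X((e2)_-, (e2)_+) < 2L(k + 1) <= 2L(s + 1), a contradiction.
*)

theory Submission
  imports Defs "HOL-Algebra.Left_Coset" "HOL-Algebra.Divisibility"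
begin

lemma evCw_Nil [simp]: "evCw G [] = \<one>\<^bsub>G\<^esub>"
  by (simp add: evCw_def)

lemma evCw_Cons [simp]: "evCw G (a # w) = evC a \<otimes>\<^bsub>G\<^esub> evCw G w"
  by (simp add: evCw_def)

lemma evCw_map_Inl: "evCw G (map Inl xs) = foldr (\<otimes>\<^bsub>G\<^esub>) xs \<one>\<^bsub>G\<^esub>"
  by (induction xs) (simp_all add: evC_def)

lemma vert_take: "t \<le> k \<Longrightarrow> vert G g (take k w) t = vert G g w t"
  by (simp add: vert_def min_absorb1)

lemma vert_append_left: "t \<le> length u \<Longrightarrow> vert G g (u @ v) t = vert G g u t"
  by (simp add: vert_def)

lemma vert_map_Inl: "vert G g (map Inl xs) (length xs) = g \<otimes>\<^bsub>G\<^esub> foldr (\<otimes>\<^bsub>G\<^esub>) xs \<one>\<^bsub>G\<^esub>"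
  by (simp add: vert_def evCw_map_Inl)

lemma is_path_map_Inl: "g \<in> carrier G \<Longrightarrow> set xs \<subseteq> X \<Longrightarrow> is_path G X Lam H g (map Inl xs)"
  by (auto simp: is_path_def validC_def)

lemma dXH_le_length:
  "is_path G X Lam H g u \<Longrightarrow> dXH G X Lam H g (vert G g u (length u)) \<le> length u"
  unfolding dXH_def is_path_def vert_def by (rule Least_le) auto

lemma component_bounds: "component l w i j \<Longrightarrow> i < j \<and> j \<le> length w"
  by (simp add: component_def Hsub_def)

lemma component_isH: "component l w i j \<Longrightarrow> i \<le> m \<Longrightarrow> m < j \<Longrightarrow> isH l (w ! m)"
  by (simp add: component_def Hsub_def)

lemma component_unique_start: "component l w i j \<Longrightarrow> component l w i j' \<Longrightarrow> j = j'"
  unfolding component_def by (metis nat_le_linear order_refl prod.inject)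

lemma component_unique_end: "component l w i j \<Longrightarrow> component l w i' j \<Longrightarrow> i = i'"
  unfolding component_def by (metis nat_le_linear order_refl prod.inject)

lemma component_next_not_isH: "component l w i j \<Longrightarrow> j < length w \<Longrightarrow> \<not> isH l (w ! j)"
  unfolding component_def Hsub_def by (metis Suc_leI less_Suc_eq n_not_Suc_n order_refl prod.inject le_SucI)

lemma component_singleI:
  assumes "i < length w" "isH l (w ! i)"
    and "0 < i \<Longrightarrow> \<not> isH l (w ! (i - 1))" and "Suc i < length w \<Longrightarrow> \<not> isH l (w ! Suc i)"
  shows "component l w i (Suc i)"
  unfolding component_def
proof (intro conjI notI)
  show "Hsub l w i (Suc i)"
    using assms(1,2) by (auto simp: Hsub_def less_Suc_eq_le dest: antisym)
  assume "\<exists>i' j'. i' \<le> i \<and> Suc i \<le> j' \<and> (i', j') \<noteq> (i, Suc i) \<and> Hsub l w i' j'"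
  then obtain i' j' where ij': "i' \<le> i" "Suc i \<le> j'" "(i', j') \<noteq> (i, Suc i)" "Hsub l w i' j'"
    by blast
  show False
  proof (cases "i' < i")
    case True
    then have "i' \<le> i - 1" "i - 1 < j'" using ij'(2) by auto
    then have "isH l (w ! (i - 1))" using ij'(4) by (simp add: Hsub_def)
    then show False using True assms(3) by simp
  next
    case False
    then have "Suc i < j'" using ij'(1-3) by auto
    then show False using ij'(1,4) assms(4) by (simp add: Hsub_def)
  qed
qed

locale relative_cayley_graph = group +
  fixes X :: "'a set" and Lam :: "'l set" and H :: "'l \<Rightarrow> 'a set"
  assumes X_sub: "X \<subseteq> carrier G"
    and X_sym: "x \<in> X \<Longrightarrow> inv x \<in> X"
    and X_gen: "generate G X = carrier G"
    and H_subgroup: "l \<in> Lam \<Longrightarrow> subgroup (H l) G"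
begin

lemma evC_closed: "validC G X Lam H a \<Longrightarrow> evC a \<in> carrier G"
  using X_sub H_subgroup
  by (auto simp: validC_def evC_def split: sum.splits dest: subgroup.mem_carrier)

lemma evCw_closed: "\<forall>a\<in>set w. validC G X Lam H a \<Longrightarrow> evCw G w \<in> carrier G"
  by (induction w) (simp_all add: evC_closed)

lemma evCw_append:
  "\<forall>a\<in>set u. validC G X Lam H a \<Longrightarrow> \<forall>a\<in>set v. validC G X Lam H a \<Longrightarrow>
    evCw G (u @ v) = evCw G u \<otimes> evCw G v"
  by (induction u) (simp_all add: m_assoc evC_closed evCw_closed)

lemma vert_closed: "is_path G X Lam H g w \<Longrightarrow> vert G g w k \<in> carrier G"
  unfolding is_path_def vert_def by (blast intro: evCw_closed in_set_takeD)

lemma vert_0 [simp]: "g \<in> carrier G \<Longrightarrow> vert G g w 0 = g"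
  by (simp add: vert_def)

lemma is_path_append_iff:
  "is_path G X Lam H g (u @ v) \<longleftrightarrow>
    is_path G X Lam H g u \<and> is_path G X Lam H (vert G g u (length u)) v"
  by (auto simp: is_path_def intro: vert_closed[unfolded is_path_def])

lemma vert_append:
  assumes "is_path G X Lam H g (u @ v)"
  shows "vert G g (u @ v) (length u + t) = vert G (vert G g u (length u)) v t"
proof -
  have "\<forall>a\<in>set u. validC G X Lam H a" "\<forall>a\<in>set (take t v). validC G X Lam H a"
    using assms by (auto simp: is_path_def dest: in_set_takeD)
  then show ?thesis
    using assms unfolding vert_def is_path_def by (simp add: evCw_append m_assoc evCw_closed)
qed

lemma path_concat:
  assumes "is_path G X Lam H g u" "vert G g u (length u) = h" "is_path G X Lam H h w"
  shows "is_path G X Lam H g (u @ w)" and "vert G g (u @ w) (length u + t) = vert G h w t"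
  using assms is_path_append_iff vert_append by blast+

lemma vert_drop:
  assumes "is_path G X Lam H g w" "j \<le> length w"
  shows "vert G (vert G g w j) (drop j w) t = vert G g w (j + t)"
  using vert_append[of g "take j w" "drop j w" t] assms by (simp add: vert_take min_absorb2)

lemma foldr_mult_shift:
  "set xs \<subseteq> carrier G \<Longrightarrow> z \<in> carrier G \<Longrightarrow> foldr (\<otimes>) xs z = foldr (\<otimes>) xs \<one> \<otimes> z"
  by (induction xs) (simp_all add: m_assoc)

lemma foldr_inv_rev:
  "set xs \<subseteq> carrier G \<Longrightarrow> foldr (\<otimes>) (map (\<lambda>x. inv x) (rev xs)) \<one> = inv (foldr (\<otimes>) xs \<one>)"
proof (induction xs)
  case (Cons a xs)
  then show ?case
    using foldr_mult_shift[of "map (\<lambda>x. inv x) (rev xs)" "inv a"] by (auto simp: inv_mult_group)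
qed simp

lemma generate_word_product: "h \<in> generate G X \<Longrightarrow> \<exists>xs. set xs \<subseteq> X \<and> foldr (\<otimes>) xs \<one> = h"
proof (induction rule: generate.induct)
  case one
  show ?case by (rule exI[of _ "[]"]) simp
next
  case (incl h)
  then show ?case using X_sub by (intro exI[of _ "[h]"]) auto
next
  case (inv h)
  then show ?case using X_sub X_sym by (intro exI[of _ "[inv h]"]) auto
next
  case (eng h1 h2)
  then obtain xs ys where "set xs \<subseteq> X" "foldr (\<otimes>) xs \<one> = h1" "set ys \<subseteq> X" "foldr (\<otimes>) ys \<one> = h2"
    by blast
  then show ?case
    using X_sub foldr_mult_shift[of xs "foldr (\<otimes>) ys \<one>"] by (intro exI[of _ "xs @ ys"]) auto
qed

lemma dX_word:
  assumes "y \<in> carrier G" "z \<in> carrier G"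
  obtains xs where "set xs \<subseteq> X" "length xs = dX G X y z" "y \<otimes> foldr (\<otimes>) xs \<one> = z"
proof -
  have "inv y \<otimes> z \<in> generate G X" using assms X_gen by simp
  then obtain xs where xs: "set xs \<subseteq> X" "foldr (\<otimes>) xs \<one> = inv y \<otimes> z"
    using generate_word_product by blast
  then have "y \<otimes> foldr (\<otimes>) xs \<one> = z"
    using assms by (simp add: m_assoc[symmetric])
  then have "\<exists>n xs. set xs \<subseteq> X \<and> length xs = n \<and> y \<otimes> foldr (\<otimes>) xs \<one> = z"
    using xs by blast
  then have "\<exists>xs. set xs \<subseteq> X \<and> length xs = dX G X y z \<and> y \<otimes> foldr (\<otimes>) xs \<one> = z"
    unfolding dX_def by (rule LeastI_ex)
  then show thesis using that by blast
qed

lemma dX_pos: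
  assumes "y \<in> carrier G" "z \<in> carrier G" "y \<noteq> z"
  shows "0 < dX G X y z"
proof -
  obtain xs where "length xs = dX G X y z" "y \<otimes> foldr (\<otimes>) xs \<one> = z"
    using dX_word[OF assms(1,2)] by blast
  then show ?thesis using assms by (cases xs) auto
qed

text \<open>The empty word when \<open>x = y\<close>, since \<open>\<one>\<close> does not label an edge.\<close>

definition coset_word :: "'l \<Rightarrow> 'a \<Rightarrow> 'a \<Rightarrow> ('a + 'l \<times> 'a) list" where
  "coset_word l x y = (if x = y then [] else [Inr (l, inv x \<otimes> y)])"

lemma
  assumes "l \<in> Lam" "x \<in> carrier G" "y \<in> x <# H l"
  shows coset_word_path: "is_path G X Lam H x (coset_word l x y)"
    and coset_word_end: "vert G x (coset_word l x y) (length (coset_word l x y)) = y"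
proof -
  have H: "subgroup (H l) G" using assms(1) by (rule H_subgroup)
  have y: "y \<in> carrier G" using l_coset_carrier[OF assms(3,2) H] .
  have "inv x \<otimes> y \<in> H l" using subgroup.lcos_module_imp[OF H is_group assms(2,3)] .
  moreover have "x \<noteq> y \<Longrightarrow> inv x \<otimes> y \<noteq> \<one>"
    using assms(2) y by (metis inv_equality inv_inv inv_closed)
  ultimately show "is_path G X Lam H x (coset_word l x y)"
    using assms(1,2) by (auto simp: coset_word_def is_path_def validC_def)
  show "vert G x (coset_word l x y) (length (coset_word l x y)) = y"
    using assms(2) y by (simp add: coset_word_def vert_def evC_def m_assoc[symmetric])
qed

lemma geodesic_shortcut:
  assumes geo: "is_geodesic G X Lam H g w" and ij: "i \<le> j" "j \<le> length w"
    and u: "is_path G X Lam H (vert G g w i) u" "vert G (vert G g w i) u (length u) = vert G g w j"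
  shows "j - i \<le> length u"
proof -
  have w: "is_path G X Lam H g w" using geo by (simp add: is_geodesic_def)
  have prefix: "is_path G X Lam H g (take i w)" "vert G g (take i w) (length (take i w)) = vert G g w i"
    using w is_path_append_iff[of g "take i w" "drop i w"] ij by (simp_all add: vert_take)
  have suffix: "is_path G X Lam H (vert G g w j) (drop j w)"
    using w is_path_append_iff[of g "take j w" "drop j w"] ij by (simp add: vert_take)
  define w' where "w' = take i w @ u @ drop j w"
  have w': "is_path G X Lam H g w'"
    using prefix u suffix by (simp add: w'_def is_path_append_iff)
  have "vert G g w' (length w') = vert G (vert G g w i) (u @ drop j w) (length u + (length w - j))"
    using w' prefix vert_append[of g "take i w" "u @ drop j w" "length u + (length w - j)"] ij
    by (simp add: w'_def)
  also have "\<dots> = vert G (vert G g w j) (drop j w) (length w - j)"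
    using w' prefix u by (simp add: w'_def is_path_append_iff vert_append)
  also have "\<dots> = vert G g w (length w)"
    using w ij by (simp add: vert_drop)
  finally have "length w \<le> length w'"
    using geo dXH_le_length[OF w'] by (simp add: is_geodesic_def)
  then show ?thesis using ij by (simp add: w'_def)
qed

lemma geodesic_coset_vertices:
  assumes geo: "is_geodesic G X Lam H g w" and "l \<in> Lam" "i \<le> j" "j \<le> length w"
    and coset: "vert G g w j \<in> vert G g w i <# H l"
  shows "j \<le> Suc i"
proof -
  have "vert G g w i \<in> carrier G"
    using geo by (simp add: is_geodesic_def vert_closed)
  then have "j - i \<le> length (coset_word l (vert G g w i) (vert G g w j))"
    using assms by (intro geodesic_shortcut[OF geo]) (simp_all add: coset_word_path coset_word_end)
  then show ?thesis by (simp add: coset_word_def split: if_splits)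
qed

lemma connected_comps_coset:
  assumes "connected_comps G H l g1 w1 i1 j1 l' g2 w2 i2 j2" "l \<in> Lam"
    and "i1 \<le> m1" "m1 \<le> j1" "i2 \<le> m2" "m2 \<le> j2"
  shows "vert G g2 w2 m2 \<in> vert G g1 w1 m1 <# H l"
proof -
  obtain x where x: "x \<in> carrier G" "comp_verts G g1 w1 i1 j1 \<subseteq> x <# H l"
    "comp_verts G g2 w2 i2 j2 \<subseteq> x <# H l"
    using assms(1) by (auto simp: connected_comps_def)
  have "vert G g1 w1 m1 \<in> x <# H l" "vert G g2 w2 m2 \<in> x <# H l"
    using x assms(3-6) by (auto simp: comp_verts_def)
  then show ?thesis
    using l_repr_independence x(1) H_subgroup[OF assms(2)] by blast
qed

lemma isolatedI:
  assumes comp: "component l w i j" and l: "l \<in> Lam" and m: "i \<le> m" "m \<le> j"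
    and other: "\<And>i' j'. component l w i' j' \<Longrightarrow> (i', j') \<noteq> (i, j) \<Longrightarrow>
           \<exists>m'. i' \<le> m' \<and> m' \<le> j' \<and> vert G g w m' \<notin> vert G g w m <# H l"
  shows "isolated G H l g w i j"
  unfolding isolated_def
proof (intro conjI comp notI)
  assume "\<exists>i' j'. (i', j') \<noteq> (i, j) \<and> component l w i' j' \<and> connected_comps G H l g w i j l g w i' j'"
  then obtain i' j' where "(i', j') \<noteq> (i, j)" "component l w i' j'"
    and conn: "connected_comps G H l g w i j l g w i' j'"
    by blast
  with other obtain m' where "i' \<le> m'" "m' \<le> j'" "vert G g w m' \<notin> vert G g w m <# H l"
    by blast
  then show False using connected_comps_coset[OF conn l m] by blast
qed

end

definition isolated_components_bounded ::
    "('a, 'b) monoid_scheme \<Rightarrow> 'a set \<Rightarrow> 'l set \<Rightarrow> ('l \<Rightarrow> 'a set) \<Rightarrow> real \<Rightarrow> bool" where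
  "isolated_components_bounded G X Lam H L \<longleftrightarrow>
    (\<forall>g w l' S. is_cycle G X Lam H g w \<and> l' \<in> Lam \<and> S \<subseteq> {(i, j). isolated G H l' g w i j} \<longrightarrow>
       (\<Sum>(i, j)\<in>S. real (dX G X (vert G g w i) (vert G g w j))) \<le> L * real (length w))"

text \<open>In the application \<open>q @ [e]\<close> is \<open>p\<^sub>2\<close>, the near component is the component of
  \<open>p\<^sub>2\<close> connected to \<open>e\<^sub>1\<close>, and \<open>P\<close> is the endpoint of \<open>e\<^sub>1\<close>.\<close>

locale component_near_endpoint = relative_cayley_graph +
  fixes g :: 'a and q :: "('a + 'l \<times> 'a) list" and e :: "'a + 'l \<times> 'a" and l :: 'l
    and i j :: nat and P :: 'a and xs :: "'a list"
  assumes geodesic: "is_geodesic G X Lam H g (q @ [e])"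
    and l_in: "l \<in> Lam"
    and last_component: "component l (q @ [e]) (length q) (Suc (length q))"
    and near_component: "component l (q @ [e]) i j"
    and near_component_not_last: "j \<le> length q"
    and P_closed: "P \<in> carrier G"
    and near_component_coset: "\<And>m. i \<le> m \<Longrightarrow> m \<le> j \<Longrightarrow> vert G g (q @ [e]) m \<in> P <# H l"
    and xs_X: "set xs \<subseteq> X"
    and xs_end: "P \<otimes> foldr (\<otimes>) xs \<one> = vert G g (q @ [e]) (Suc (length q))"
begin

abbreviation v :: "nat \<Rightarrow> 'a" where "v \<equiv> vert G g (q @ [e])"

lemma geodesic_is_path: "is_path G X Lam H g (q @ [e])"
  using geodesic by (simp add: is_geodesic_def)

lemma v_closed: "v m \<in> carrier G"
  using geodesic_is_path by (rule vert_closed)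

lemma near_component_start_less: "i < j"
  using component_bounds[OF near_component] by simp

lemma far_vertex_not_in_coset:
  assumes "i + 2 \<le> m" "m \<le> Suc (length q)"
  shows "v m \<notin> P <# H l"
proof
  assume "v m \<in> P <# H l"
  moreover have "v i \<in> P <# H l"
    using near_component_coset near_component_start_less by simp
  then have "P <# H l = v i <# H l"
    by (rule l_repr_independence[OF _ P_closed H_subgroup[OF l_in]])
  ultimately have "m \<le> Suc i"
    using geodesic_coset_vertices[OF geodesic l_in, of i m] assms by simp
  then show False using assms by simp
qed

lemma endpoint_not_in_coset: "v (Suc (length q)) \<notin> P <# H l"
  using far_vertex_not_in_coset near_component_start_less near_component_not_last by simp

lemma xs_nonempty: "xs \<noteq> []"
proof
  assume "xs = []"
  then have "v (Suc (length q)) \<in> P <# H l"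
    using xs_end P_closed H_subgroup[OF l_in] by (simp add: lcos_self)
  then show False using endpoint_not_in_coset by blast
qed

lemma shortcut_bound: "Suc (length q) - j \<le> length (coset_word l P (v j)) + length xs"
proof -
  have vj: "v j \<in> P <# H l" using near_component_coset near_component_start_less by simp
  then have P: "P \<in> v j <# H l" using l_coset_swap P_closed H_subgroup[OF l_in] by blast
  let ?u = "coset_word l (v j) P @ map Inl xs"
  note concat = path_concat[OF coset_word_path[OF l_in v_closed P] coset_word_end[OF l_in v_closed P]
      is_path_map_Inl[OF P_closed xs_X]]
  have u: "is_path G X Lam H (v j) ?u" "vert G (v j) ?u (length ?u) = v (Suc (length q))"
    using concat(1) concat(2)[of "length xs"] by (simp_all add: vert_map_Inl xs_end)
  have "Suc (length q) - j \<le> length ?u"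
    using geodesic_shortcut[OF geodesic _ _ u] near_component_not_last by simp
  then show ?thesis by (auto simp: coset_word_def split: if_splits)
qed

definition return_word :: "'a list" where
  "return_word = map (\<lambda>x. inv x) (rev xs)"

lemma return_word:
  shows "set return_word \<subseteq> X" and "length return_word = length xs"
    and "vert G (v (Suc (length q))) (map Inl return_word) (length return_word) = P"
proof -
  show "set return_word \<subseteq> X" "length return_word = length xs"
    using xs_X X_sym by (auto simp: return_word_def)
  have "set xs \<subseteq> carrier G" using xs_X X_sub by blast
  then have "v (Suc (length q)) \<otimes> foldr (\<otimes>) return_word \<one> = P"
    using xs_end[symmetric] P_closed by (simp add: return_word_def foldr_inv_rev m_assoc)
  then show "vert G (v (Suc (length q))) (map Inl return_word) (length return_word) = P"
    by (simp add: vert_map_Inl)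
qed

definition cycle :: "('a + 'l \<times> 'a) list" where
  "cycle = e # map Inl return_word @ coset_word l P (v j) @ drop j q"

lemma length_cycle: "length cycle = Suc (length xs) + length (coset_word l P (v j)) + (length q - j)"
  by (simp add: cycle_def return_word(2))

lemma
  shows cycle_path: "is_path G X Lam H (v (length q)) cycle"
    and vert_cycle_1: "vert G (v (length q)) cycle 1 = v (Suc (length q))"
    and vert_cycle_P: "vert G (v (length q)) cycle (Suc (length xs)) = P"
    and vert_cycle_tail: "t \<le> length q - j \<Longrightarrow>
      vert G (v (length q)) cycle (Suc (length xs) + length (coset_word l P (v j)) + t) = v (j + t)"
proof -
  let ?b = "coset_word l P (v j)"
  have q: "is_path G X Lam H g q" and e: "is_path G X Lam H (v (length q)) [e]"
    using geodesic_is_path is_path_append_iff[of g q "[e]"] by (simp_all add: vert_append_left)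
  have q_vert: "vert G g q m = v m" if "m \<le> length q" for m
    using that by (simp add: vert_append_left)
  have tail: "is_path G X Lam H (v j) (drop j q)"
    "t \<le> length q - j \<Longrightarrow> vert G (v j) (drop j q) t = v (j + t)" for t
    using q is_path_append_iff[of g "take j q" "drop j q"] vert_drop[OF q, of j t] near_component_not_last
    by (simp_all add: vert_take q_vert)
  have vj: "v j \<in> P <# H l" using near_component_coset near_component_start_less by simp
  note b = path_concat[OF coset_word_path[OF l_in P_closed vj] coset_word_end[OF l_in P_closed vj] tail(1)]
  note ys = path_concat[OF is_path_map_Inl[OF v_closed return_word(1)] _ b(1), simplified, OF return_word(3)]
  have "vert G (v (length q)) [e] (length [e]) = v (Suc (length q))"
    using vert_drop[OF geodesic_is_path, of "length q" 1] by simp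
  moreover have "cycle = [e] @ map Inl return_word @ ?b @ drop j q"
    by (simp add: cycle_def)
  ultimately have cyc: "is_path G X Lam H (v (length q)) cycle"
    "vert G (v (length q)) cycle (Suc t) = vert G (v (Suc (length q))) (map Inl return_word @ ?b @ drop j q) t"
    for t
    using path_concat[OF e _ ys(1)] by simp_all
  show "is_path G X Lam H (v (length q)) cycle" by (rule cyc(1))
  show "vert G (v (length q)) cycle 1 = v (Suc (length q))"
    using cyc(2)[of 0] v_closed by simp
  show "vert G (v (length q)) cycle (Suc (length xs)) = P"
    using cyc(2) ys(2)[of 0] b(2)[of 0] P_closed return_word(2) by simp
  show "vert G (v (length q)) cycle (Suc (length xs) + length ?b + t) = v (j + t)"
    if "t \<le> length q - j"
    using cyc(2) ys(2) b(2) tail(2)[OF that] return_word(2) by (simp add: add.assoc)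
qed

lemma cycle_nth_tail:
  "t < length q - j \<Longrightarrow>
    cycle ! (Suc (length xs) + length (coset_word l P (v j)) + t) = (q @ [e]) ! (j + t)"
  by (auto simp: cycle_def nth_append return_word(2))

lemma cycle_isH_positions:
  assumes "isH l (cycle ! m)" "m < length cycle"
  obtains "m = 0"
    | "m = Suc (length xs)" "P \<noteq> v j"
    | t where "t < length q - j" "m = Suc (length xs) + length (coset_word l P (v j)) + t"
proof -
  let ?k = "length xs" and ?f = "length (coset_word l P (v j))"
  show thesis
  proof (cases "m \<le> ?k")
    case True
    show thesis
    proof (cases m)
      case (Suc t)
      then have "cycle ! m = Inl (return_word ! t)"
        using True by (simp add: cycle_def nth_append return_word(2))
      then show thesis using assms(1) by (simp add: isH_def)
    qed (rule that(1))
  next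
    case False
    show thesis
    proof (cases "m < Suc ?k + ?f")
      case True
      then have "m = Suc ?k" "P \<noteq> v j"
        using False by (auto simp: coset_word_def split: if_splits)
      then show thesis by (rule that(2))
    next
      case False
      then show thesis
        using that(3)[of "m - (Suc ?k + ?f)"] assms(2) length_cycle by simp
    qed
  qed
qed

lemma last_edge_isolated: "isolated G H l (v (length q)) cycle 0 1"
proof (rule isolatedI[where m = 1])
  show first: "component l cycle 0 1"
    unfolding One_nat_def
  proof (rule component_singleI)
    show "isH l (cycle ! 0)"
      using component_isH[OF last_component, of "length q"] by (simp add: cycle_def)
    show "\<not> isH l (cycle ! Suc 0)"
      using xs_nonempty return_word(2) by (cases return_word) (auto simp: cycle_def isH_def)
  qed (simp_all add: cycle_def)
  fix i' j'
  assume comp: "component l cycle i' j'" and other: "(i', j') \<noteq> (0, 1)"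
  have "isH l (cycle ! i')" "i' < length cycle"
    using component_isH[OF comp] component_bounds[OF comp] by auto
  then have "vert G (v (length q)) cycle i' \<notin> v (Suc (length q)) <# H l"
  proof (cases rule: cycle_isH_positions)
    case 1
    then show ?thesis using component_unique_start[OF first] comp other by blast
  next
    case 2
    then show ?thesis
      using endpoint_not_in_coset l_coset_swap[OF _ v_closed H_subgroup[OF l_in]] vert_cycle_P by auto
  next
    case (3 t)
    show ?thesis
    proof
      assume "vert G (v (length q)) cycle i' \<in> v (Suc (length q)) <# H l"
      then have "v (Suc (length q)) \<in> v (j + t) <# H l"
        using 3 vert_cycle_tail[of t] l_coset_swap[OF _ v_closed H_subgroup[OF l_in]] by simp
      then have "Suc (length q) \<le> Suc (j + t)"
        using geodesic_coset_vertices[OF geodesic l_in, of "j + t" "Suc (length q)"] 3 by simp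
      then show False using 3 by simp
    qed
  qed
  then show "\<exists>m'. i' \<le> m' \<and> m' \<le> j' \<and> vert G (v (length q)) cycle m' \<notin> vert G (v (length q)) cycle 1 <# H l"
    using component_bounds[OF comp] vert_cycle_1 by (intro exI[of _ i']) simp
qed (simp_all add: l_in)

lemma bridge_isolated:
  assumes bridge: "P \<noteq> v j"
  shows "isolated G H l (v (length q)) cycle (Suc (length xs)) (Suc (Suc (length xs)))"
proof (rule isolatedI[where m = "Suc (length xs)"])
  have len: "length cycle = Suc (Suc (length xs)) + (length q - j)"
    using length_cycle bridge by (simp add: coset_word_def)
  show edge: "component l cycle (Suc (length xs)) (Suc (Suc (length xs)))"
  proof (rule component_singleI)
    show "isH l (cycle ! Suc (length xs))"
      using bridge return_word(2) by (simp add: cycle_def nth_append coset_word_def isH_def)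
    show "\<not> isH l (cycle ! (Suc (length xs) - 1))"
      using xs_nonempty len by (auto elim: cycle_isH_positions)
    show "\<not> isH l (cycle ! Suc (Suc (length xs)))" if "Suc (Suc (length xs)) < length cycle"
      using that len cycle_nth_tail[of 0] bridge component_next_not_isH[OF near_component]
        near_component_not_last by (simp add: coset_word_def)
  qed (simp add: len)
  fix i' j'
  assume comp: "component l cycle i' j'" and other: "(i', j') \<noteq> (Suc (length xs), Suc (Suc (length xs)))"
  have "isH l (cycle ! i')" "i' < length cycle"
    using component_isH[OF comp] component_bounds[OF comp] by auto
  then show "\<exists>m'. i' \<le> m' \<and> m' \<le> j' \<and>
      vert G (v (length q)) cycle m' \<notin> vert G (v (length q)) cycle (Suc (length xs)) <# H l"
  proof (cases rule: cycle_isH_positions)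
    case 1
    then show ?thesis
      using component_bounds[OF comp] endpoint_not_in_coset vert_cycle_1 vert_cycle_P
      by (intro exI[of _ 1]) simp
  next
    case 2
    then show ?thesis using component_unique_start[OF edge] comp other by blast
  next
    case (3 t)
    then have "vert G (v (length q)) cycle (Suc i') = v (j + Suc t)"
      using vert_cycle_tail[of "Suc t"] by simp
    then show ?thesis
      using 3 component_bounds[OF comp] far_vertex_not_in_coset[of "j + Suc t"] near_component_start_less
        near_component_not_last vert_cycle_P by (intro exI[of _ "Suc i'"]) simp
  qed
qed (simp_all add: l_in)

lemma last_edge_short:
  assumes L_pos: "0 < L" and bounded: "isolated_components_bounded G X Lam H L"
  shows "real (dX G X (v (length q)) (v (Suc (length q)))) < 2 * L * (real (length xs) + 1)"
proof -
  let ?B = "v (length q)" and ?k = "length xs"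
  let ?d = "\<lambda>(a, b). real (dX G X (vert G ?B cycle a) (vert G ?B cycle b))"
  have "is_cycle G X Lam H ?B cycle"
    using cycle_path vert_cycle_tail[of "length q - j"] near_component_not_last
    by (simp add: is_cycle_def length_cycle)
  then have bound: "sum ?d S \<le> L * real (length cycle)"
    if "S \<subseteq> {(a, b). isolated G H l ?B cycle a b}" for S
    using bounded l_in that unfolding isolated_components_bounded_def by blast
  have "length cycle \<le> 2 * ?k + 2 * length (coset_word l P (v j))"
    using length_cycle shortcut_bound near_component_not_last by simp
  from of_nat_mono[OF this]
  have len: "real (length cycle) \<le> 2 * ?k + 2 * length (coset_word l P (v j))"
    by simp
  have first: "?d (0, 1) = real (dX G X ?B (v (Suc (length q))))"
    using vert_cycle_1 v_closed by simp
  show ?thesis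
  proof (cases "P = v j")
    case True
    have "?d (0, 1) \<le> L * real (length cycle)"
      using bound[of "{(0, 1)}"] last_edge_isolated by simp
    also have "\<dots> \<le> L * (2 * ?k)"
      using len True L_pos by (intro mult_left_mono) (simp_all add: coset_word_def)
    also have "\<dots> < 2 * L * (real ?k + 1)"
      using L_pos by (simp add: algebra_simps)
    finally show ?thesis using first by simp
  next
    case False
    have "?d (Suc ?k, Suc (Suc ?k)) = real (dX G X P (v j))"
      using vert_cycle_P vert_cycle_tail[of 0] False by (simp add: coset_word_def)
    moreover have "?d (0, 1) + ?d (Suc ?k, Suc (Suc ?k)) \<le> L * real (length cycle)"
      using bound[of "{(0, 1), (Suc ?k, Suc (Suc ?k))}"] last_edge_isolated bridge_isolated[OF False]
      by simp
    moreover have "L * real (length cycle) \<le> L * (2 * ?k + 2)"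
      using len False L_pos by (intro mult_left_mono) (simp_all add: coset_word_def)
    moreover have "0 < dX G X P (v j)"
      using dX_pos P_closed v_closed False by blast
    ultimately show ?thesis using first by (simp add: algebra_simps)
  qed
qed

end

lemma (in relative_cayley_graph) last_edge_short_if_component_near_endpoint:
  assumes L_pos: "0 < L" and bounded: "isolated_components_bounded G X Lam H L"
    and geo: "is_geodesic G X Lam H g (q @ [e])" and l: "l \<in> Lam"
    and last: "component l (q @ [e]) (length q) (Suc (length q))"
    and near: "component l (q @ [e]) i j" "j \<le> length q"
    and P: "P \<in> carrier G"
    and coset: "\<And>m. i \<le> m \<Longrightarrow> m \<le> j \<Longrightarrow> vert G g (q @ [e]) m \<in> P <# H l"
  shows "real (dX G X (vert G g (q @ [e]) (length q)) (vert G g (q @ [e]) (Suc (length q))))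
    < 2 * L * (real (dX G X P (vert G g (q @ [e]) (Suc (length q)))) + 1)"
proof -
  have "vert G g (q @ [e]) (Suc (length q)) \<in> carrier G"
    using geo by (simp add: is_geodesic_def vert_closed)
  then obtain xs where xs: "set xs \<subseteq> X" "length xs = dX G X P (vert G g (q @ [e]) (Suc (length q)))"
    "P \<otimes> foldr (\<otimes>) xs \<one> = vert G g (q @ [e]) (Suc (length q))"
    using dX_word[OF P] by blast
  interpret component_near_endpoint G X Lam H g q e l i j P xs
    using geo l last near P coset xs(1,3) by unfold_locales simp_all
  show ?thesis
    using last_edge_short[OF L_pos bounded] xs(2) by simp
qed

theorem lemma3p1:
  fixes G :: "('a, 'b) monoid_scheme" and X :: "'a set" and Lam :: "'l set"
    and H :: "'l \<Rightarrow> 'a set" and L s eps :: real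
    and g1 g2 :: 'a and q1 q2 :: "('a + ('l \<times> 'a)) list" and e1 e2 :: "'a + ('l \<times> 'a)"
    and l :: 'l
  assumes grp: "group G"
    and X_fin: "finite X" and X_sub: "X \<subseteq> carrier G"
    and X_sym: "\<forall>x\<in>X. inv\<^bsub>G\<^esub> x \<in> X"
    and X_gen: "generate G X = carrier G"
    and Lam_fin: "finite Lam"
    and subgr: "\<forall>l\<in>Lam. subgroup (H l) G"
    and relhyp: "rel_hyperbolic G X Lam H"
    and L_pos: "L > 0"
    and L_prop: "\<forall>g w l' S. is_cycle G X Lam H g w \<and> l' \<in> Lam \<and>
                   S \<subseteq> {(i, j). isolated G H l' g w i j} \<longrightarrow>
                   (\<Sum>(i, j)\<in>S. real (dX G X (vert G g w i) (vert G g w j))) \<le> L * real (length w)"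
    and s_nonneg: "s \<ge> 0"
    and eps_nonneg: "eps \<ge> 0"
    and eps_prop: "\<forall>h1 w1 h2 w2 l' i j.
                   is_geodesic G X Lam H h1 w1 \<and> is_geodesic G X Lam H h2 w2 \<and>
                   real (dX G X (vert G h1 w1 0) (vert G h2 w2 0)) \<le> s \<and>
                   real (dX G X (vert G h1 w1 (length w1)) (vert G h2 w2 (length w2))) \<le> s \<and>
                   component l' w1 i j \<and> real (dX G X (vert G h1 w1 i) (vert G h1 w1 j)) \<ge> eps \<longrightarrow>
                   (\<exists>l'' i' j'. connected_comps G H l' h1 w1 i j l'' h2 w2 i' j')"
    and geo1: "is_geodesic G X Lam H g1 (q1 @ [e1])"
    and geo2: "is_geodesic G X Lam H g2 (q2 @ [e2])"
    and start_close: "real (dX G X (vert G g1 (q1 @ [e1]) 0) (vert G g2 (q2 @ [e2]) 0)) \<le> s"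
    and end_close: "real (dX G X (vert G g1 (q1 @ [e1]) (Suc (length q1)))
                                 (vert G g2 (q2 @ [e2]) (Suc (length q2)))) \<le> s"
    and l_in: "l \<in> Lam"
    and comp1: "component l (q1 @ [e1]) (length q1) (Suc (length q1))"
    and comp2: "component l (q2 @ [e2]) (length q2) (Suc (length q2))"
    and big1: "real (dX G X (vert G g1 (q1 @ [e1]) (length q1)) (vert G g1 (q1 @ [e1]) (Suc (length q1))))
                 \<ge> max eps (2 * L * (s + 1))"
    and big2: "real (dX G X (vert G g2 (q2 @ [e2]) (length q2)) (vert G g2 (q2 @ [e2]) (Suc (length q2))))
                 \<ge> max eps (2 * L * (s + 1))"
  shows "connected_comps G H l g1 (q1 @ [e1]) (length q1) (Suc (length q1))
                         l g2 (q2 @ [e2]) (length q2) (Suc (length q2))"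
proof -
  \<comment> \<open>Finiteness and relative hyperbolicity enter only through the constants \<open>L\<close> and \<open>eps\<close>.\<close>
  interpret relative_cayley_graph G X Lam H
    using grp X_sub X_sym X_gen subgr
    by (simp add: relative_cayley_graph_def relative_cayley_graph_axioms_def)
  have "eps \<le> real (dX G X (vert G g1 (q1 @ [e1]) (length q1)) (vert G g1 (q1 @ [e1]) (Suc (length q1))))"
    using big1 by simp
  moreover have "real (dX G X (vert G g1 (q1 @ [e1]) (length (q1 @ [e1])))
      (vert G g2 (q2 @ [e2]) (length (q2 @ [e2])))) \<le> s"
    using end_close by simp
  ultimately obtain l' i j where conn: "connected_comps G H l g1 (q1 @ [e1]) (length q1) (Suc (length q1))
      l' g2 (q2 @ [e2]) i j"
    using eps_prop[rule_format, of g1 "q1 @ [e1]" g2 "q2 @ [e2]" l "length q1" "Suc (length q1)"]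
      geo1 geo2 start_close comp1 by blast
  then have comp: "component l (q2 @ [e2]) i j" and "l' = l"
    by (simp_all add: connected_comps_def)
  show ?thesis
  proof (cases "j \<le> length q2")
    case True
    let ?P = "vert G g1 (q1 @ [e1]) (Suc (length q1))"
    have "?P \<in> carrier G"
      using geo1 by (simp add: is_geodesic_def vert_closed)
    moreover have "vert G g2 (q2 @ [e2]) m \<in> ?P <#\<^bsub>G\<^esub> H l" if "i \<le> m" "m \<le> j" for m
      using connected_comps_coset[OF conn l_in, of "Suc (length q1)" m] that by simp
    ultimately have "real (dX G X (vert G g2 (q2 @ [e2]) (length q2)) (vert G g2 (q2 @ [e2]) (Suc (length q2))))
        < 2 * L * (real (dX G X ?P (vert G g2 (q2 @ [e2]) (Suc (length q2)))) + 1)"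
      using L_pos L_prop geo2 l_in comp2 comp True
      by (intro last_edge_short_if_component_near_endpoint) (simp_all add: isolated_components_bounded_def)
    also have "\<dots> \<le> 2 * L * (s + 1)"
      using end_close L_pos by (intro mult_left_mono) simp_all
    finally show ?thesis using big2 by simp
  next
    case False
    then have "j = Suc (length q2)"
      using component_bounds[OF comp] by simp
    moreover from this have "i = length q2"
      using component_unique_end[OF comp2, of i] comp by simp
    ultimately show ?thesis
      using conn \<open>l' = l\<close> by simp
  qed
qed

end
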